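(* For integers $j\ge 0$ define $$f_j:=\frac{j^2+5j+2}{8j+4}\binom{2j+2}{j+1}-4^j,\qquad h_j:=2^{2j-1}-\binom{2j+1}{j}+\binom{2j-1}{j-1}\ (j\ge 1),\qquad h_0:=0,$$ and let $C_j=\frac{1}{j+1}\binom{2j}{j}$ be the $j$-th Catalan number. Then for every integer $s\ge 1$, $$f_s=\sum_{i=1}^{s}C_{s-i}\bigl(2f_{i-1}+h_{i-1}\bigr).$$ *)

theory Defs
  imports Complex_Main
begin

definition catalan :: "nat \<Rightarrow> real" where
  "catalan j = real ((2*j) choose j) / (real j + 1)"

definition f_seq :: "nat \<Rightarrow> real" where
  "f_seq j = (real j ^ 2 + 5 * real j + 2) / (8 * real j + 4) * real ((2*j+2) choose (j+1)) - 4 ^ j"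

definition h_seq :: "nat \<Rightarrow> real" where
  "h_seq j = (if j = 0 then 0 else
     2 ^ (2*j-1) - real ((2*j+1) choose j) + real ((2*j-1) choose (j-1)))"

end

theory Submission
  imports Defs "HOL-Computational_Algebra.Formal_Power_Series"
begin

text \<open>
  Write coeff_1m4x b k for the coefficient of x^k in (1 - 4x)^b. Then
  binom(2k,k) = coeff_1m4x (-1/2) k, (2k+1) binom(2k,k) = coeff_1m4x (-3/2) k,
  4^k = coeff_1m4x (-1) k and C_k = - coeff_1m4x (1/2) (k+1) / 2, so 2 f_k + h_k is a
  linear combination of these coefficient sequences and of C_k.
  Because the Catalan generating function is (1 - (1 - 4x)^(1/2)) / (2x), convolving
  coeff_1m4x b with C is a Vandermonde convolution: it yields the difference of
  coeff_1m4x b and coeff_1m4x (b + 1/2) at the next index. Together with Segner's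
  recurrence for the C_k term, this evaluates the right-hand side in closed form.
\<close>

lemma binomial_double_Suc_Suc: "(2 * k + 2) choose (k + 1) = 2 * ((2 * k + 1) choose k)"
  using binomial_Suc_Suc[of "2 * k + 1" k] binomial_symmetric[of "Suc k" "2 * k + 1"]
  by simp

lemma Suc_times_binomial_odd: "(k + 1) * ((2 * k + 1) choose k) = (2 * k + 1) * ((2 * k) choose k)"
  using Suc_times_binomial_eq[of "2 * k" k] binomial_symmetric[of "Suc k" "2 * k + 1"]
  by simp

lemma real_binomial_odd:
  "real ((2 * k + 1) choose k) = (2 * real k + 1) / (real k + 1) * real ((2 * k) choose k)"
proof -
  have "(real k + 1) * real ((2 * k + 1) choose k) = (2 * real k + 1) * real ((2 * k) choose k)"
    using arg_cong[OF Suc_times_binomial_odd[of k], of real] by (simp add: algebra_simps)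
  then show ?thesis by (simp add: field_simps add_nonneg_eq_0_iff)
qed

lemma real_central_binomial_Suc:
  "real ((2 * k + 2) choose (k + 1)) = 2 * (2 * real k + 1) / (real k + 1) * real ((2 * k) choose k)"
  by (simp only: binomial_double_Suc_Suc real_binomial_odd of_nat_mult of_nat_numeral)

definition coeff_1m4x :: "real \<Rightarrow> nat \<Rightarrow> real" where
  "coeff_1m4x b k = (-4) ^ k * (b gchoose k)"

lemma coeff_1m4x_add:
  "coeff_1m4x (a + b) n = (\<Sum>k=0..n. coeff_1m4x a k * coeff_1m4x b (n - k))"
proof -
  have "coeff_1m4x (a + b) n = (\<Sum>k=0..n. (-4) ^ n * ((a gchoose k) * (b gchoose (n - k))))"
    by (simp only: coeff_1m4x_def gbinomial_Vandermonde[symmetric] sum_distrib_left)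
  also have "\<dots> = (\<Sum>k=0..n. coeff_1m4x a k * coeff_1m4x b (n - k))"
    by (intro sum.cong refl) (simp add: coeff_1m4x_def power_add[symmetric])
  finally show ?thesis .
qed

lemma coeff_1m4x_0 [simp]: "coeff_1m4x b 0 = 1"
  by (simp add: coeff_1m4x_def)

lemma coeff_1m4x_Suc:
  "coeff_1m4x b (Suc k) = -4 * (b - real k) / (real k + 1) * coeff_1m4x b k"
proof -
  have "(real k + 1) * (b gchoose Suc k) = (b - real k) * (b gchoose k)"
    using gbinomial_mult_1[of b k] by (simp add: algebra_simps)
  then have "b gchoose Suc k = (b - real k) / (real k + 1) * (b gchoose k)"
    by (simp add: field_simps add_nonneg_eq_0_iff)
  then show ?thesis
    by (simp add: coeff_1m4x_def algebra_simps)
qed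

(* Negative constants are written - (1/2) rather than -1/2, the form simp normalizes to. *)
lemma coeff_1m4x_neg_half: "coeff_1m4x (- (1/2)) k = real ((2 * k) choose k)"
proof (induction k)
  case (Suc k)
  then show ?case
    using real_central_binomial_Suc[of k] by (simp add: coeff_1m4x_Suc field_simps)
qed simp

lemma Suc_times_coeff_1m4x_Suc:
  "(real k + 1) * coeff_1m4x b (Suc k) = -4 * b * coeff_1m4x (b - 1) k"
proof -
  have "(real k + 1) * coeff_1m4x b (Suc k) = (-4) ^ Suc k * (real (Suc k) * (b gchoose Suc k))"
    by (simp add: coeff_1m4x_def algebra_simps)
  also have "\<dots> = (-4) ^ Suc k * (b * ((b - 1) gchoose k))"
    by (simp only: gbinomial_absorption)
  finally show ?thesis
    by (simp add: coeff_1m4x_def)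
qed

lemma coeff_1m4x_half_Suc: "coeff_1m4x (1/2) (Suc k) = -2 * catalan k"
proof -
  have "(real k + 1) * coeff_1m4x (1/2) (Suc k) = -2 * real ((2 * k) choose k)"
    using Suc_times_coeff_1m4x_Suc[of k "1/2"] coeff_1m4x_neg_half[of k] by simp
  then show ?thesis
    by (simp add: catalan_def field_simps add_nonneg_eq_0_iff)
qed

lemma coeff_1m4x_neg_three_halves:
  "coeff_1m4x (- (3/2)) k = (2 * real k + 1) * real ((2 * k) choose k)"
proof -
  have "2 * coeff_1m4x (- (3/2)) k = (real k + 1) * coeff_1m4x (- (1/2)) (Suc k)"
    using Suc_times_coeff_1m4x_Suc[of k "- (1/2)"] by simp
  also have "\<dots> = (real k + 1) * (-4 * (- (1/2) - real k) / (real k + 1) * real ((2 * k) choose k))"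
    by (simp only: coeff_1m4x_Suc coeff_1m4x_neg_half)
  also have "\<dots> = 2 * ((2 * real k + 1) * real ((2 * k) choose k))"
    by (simp add: field_simps add_nonneg_eq_0_iff)
  finally show ?thesis by simp
qed

lemma coeff_1m4x_neg_one: "coeff_1m4x (-1) k = 4 ^ k"
  by (induction k) (simp_all add: coeff_1m4x_Suc field_simps)

lemma coeff_1m4x_one_Suc_Suc: "coeff_1m4x 1 (Suc (Suc k)) = 0"
  using binomial_gbinomial[of 1 "Suc (Suc k)", where 'a=real] by (simp add: coeff_1m4x_def)

lemma sum_catalan_times_coeff_1m4x:
  "(\<Sum>k=0..n. catalan (n - k) * coeff_1m4x b k)
     = (coeff_1m4x b (Suc n) - coeff_1m4x (b + 1/2) (Suc n)) / 2"
proof -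
  have "coeff_1m4x (b + 1/2) (Suc n)
      = (\<Sum>k=0..n. coeff_1m4x b k * coeff_1m4x (1/2) (Suc (n - k))) + coeff_1m4x b (Suc n)"
    by (simp add: coeff_1m4x_add Suc_diff_le)
  also have "\<dots> = -2 * (\<Sum>k=0..n. catalan (n - k) * coeff_1m4x b k) + coeff_1m4x b (Suc n)"
    by (simp add: coeff_1m4x_half_Suc sum_distrib_left mult.commute mult.left_commute)
  finally show ?thesis by simp
qed

lemma catalan_Suc: "catalan (Suc n) = (\<Sum>k=0..n. catalan (n - k) * catalan k)"
proof -
  have "- catalan (Suc n) = coeff_1m4x (1/2) (Suc (Suc n)) / 2"
    by (simp add: coeff_1m4x_half_Suc)
  also have "\<dots> = (\<Sum>k=0..Suc n. catalan (Suc n - k) * coeff_1m4x (1/2) k)"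
    using sum_catalan_times_coeff_1m4x[of "Suc n" "1/2"] by (simp add: coeff_1m4x_one_Suc_Suc)
  also have "\<dots> = catalan (Suc n) - 2 * (\<Sum>k=0..n. catalan (n - k) * catalan k)"
    by (simp only: sum.atLeast0_atMost_Suc_shift)
      (simp add: coeff_1m4x_half_Suc sum_distrib_left sum_negf mult.commute mult.left_commute)
  finally show ?thesis by simp
qed

lemma f_seq_eq_central_binomial:
  "f_seq k = (real k ^ 2 + 5 * real k + 2) / (2 * (real k + 1)) * real ((2 * k) choose k) - 4 ^ k"
  unfolding f_seq_def real_central_binomial_Suc
  by (simp add: field_simps add_nonneg_eq_0_iff)

lemma h_seq_eq_central_binomial:
  "h_seq k = 4 ^ k / 2 - (3 * real k + 1) / (2 * (real k + 1)) * real ((2 * k) choose k)"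
proof (cases k)
  case (Suc j)
  have "2 * real ((2 * j + 1) choose j) = real ((2 * k) choose k)"
    using binomial_double_Suc_Suc[of j] Suc by simp
  moreover have "(2::real) ^ (2 * k - 1) = 4 ^ k / 2"
    using Suc by (simp add: power_mult)
  ultimately show ?thesis
    using Suc real_binomial_odd[of k]
    by (simp add: h_seq_def field_simps add_nonneg_eq_0_iff)
qed (simp add: h_seq_def)

lemma two_f_seq_plus_h_seq:
  "2 * f_seq k + h_seq k
     = coeff_1m4x (- (3/2)) k / 2 + 2 * coeff_1m4x (- (1/2)) k - catalan k - 3/2 * coeff_1m4x (-1) k"
  by (simp add: f_seq_eq_central_binomial h_seq_eq_central_binomial coeff_1m4x_neg_three_halves
      coeff_1m4x_neg_half coeff_1m4x_neg_one catalan_def field_simps add_nonneg_eq_0_iff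
      power2_eq_square)

theorem lemma2p1:
  fixes s :: nat
  assumes "s \<ge> 1"
  shows "f_seq s = (\<Sum>i=1..s. catalan (s - i) * (2 * f_seq (i - 1) + h_seq (i - 1)))"
proof -
  obtain n where s: "s = Suc n" using assms by (cases s) auto
  let ?S = "\<lambda>b. \<Sum>k=0..n. catalan (n - k) * coeff_1m4x b k"
  have "(\<Sum>i=1..s. catalan (s - i) * (2 * f_seq (i - 1) + h_seq (i - 1)))
      = (\<Sum>k=0..n. catalan (n - k) * (2 * f_seq k + h_seq k))"
    unfolding s by (simp only: One_nat_def sum.shift_bounds_cl_Suc_ivl) simp
  also have "\<dots> = ?S (- (3/2)) / 2 + 2 * ?S (- (1/2)) - (\<Sum>k=0..n. catalan (n - k) * catalan k)
      - 3/2 * ?S (-1)"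
    unfolding two_f_seq_plus_h_seq
    by (simp add: sum.distrib sum_subtractf sum_distrib_left sum_divide_distrib algebra_simps)
  also have "\<dots> = (coeff_1m4x (- (3/2)) s - coeff_1m4x (-1) s) / 4
      + (coeff_1m4x (- (1/2)) s - coeff_1m4x 0 s) - catalan s
      - 3/4 * (coeff_1m4x (-1) s - coeff_1m4x (- (1/2)) s)"
    by (simp add: sum_catalan_times_coeff_1m4x catalan_Suc s)
  also have "\<dots> = f_seq s"
    by (simp add: s coeff_1m4x_def[of 0] coeff_1m4x_neg_three_halves coeff_1m4x_neg_half
        coeff_1m4x_neg_one catalan_def f_seq_eq_central_binomial field_simps
        add_nonneg_eq_0_iff power2_eq_square)
  finally show ?thesis ..
qed

end
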